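(* Let $d\ge0$ and $n>d$ be integers, and let $T_1\subset\{1,\dots,n\}$ be such that $\{T_1\}\in L(n,d)$. Then the poset ideal $\mathcal{I}_{n,d}(\{T_1\})$ is isomorphic as a poset to $L(n-|T_1|,\,d-|T_1|)$.
   Context: For a finite set $X$ let $\operatorname{codim}_d(X)=d+1-|X|$. For a finite collection $\{T_1,\dots,T_l\}$ of pairwise distinct finite sets put $\rho_d(\{T_1,\dots,T_l\})=\sum_{i=1}^l\operatorname{codim}_d(T_i)$ (with $\rho_d(\emptyset)=0$) and $D_d(\{T_1,\dots,T_l\})=\operatorname{codim}_d(T_1\cap\cdots\cap T_l)-\rho_d(\{T_1,\dots,T_l\})$. For integers $d\ge0$, $n>d$, $L(n,d)$ is the set of all collections $T$ of subsets of $\{1,\dots,n\}$ such that (i) $D_d(T')>0$ for every $T'\subset T$ with $|T'|>1$, and (ii) $0\le|T_i|\le d$ for every $T_i\in T$ (so $L(n,0)=\{\emptyset,\{\emptyset\}\}$). It is partially ordered by: $T<T'$ iff $\rho_d(T)<\rho_d(T')$ and for every $T_i\in T$ there exists $T'_j\in T'$ with $T'_j\subset T_i$; $T\le T'$ means $T<T'$ or $T=T'$. For $T\in L(n,d)$, $\mathcal{I}_{n,d}(T)=\{S\in L(n,d): S\le T\}$ with the induced order. *)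

theory Defs
  imports Main
begin

definition codim :: "nat \<Rightarrow> nat set \<Rightarrow> int" where
  "codim d X = int d + 1 - int (card X)"

definition rho :: "nat \<Rightarrow> nat set set \<Rightarrow> int" where
  "rho d T = (\<Sum>X\<in>T. codim d X)"

definition Dd :: "nat \<Rightarrow> nat set set \<Rightarrow> int" where
  "Dd d T = codim d (\<Inter>T) - rho d T"

definition Lnd :: "nat \<Rightarrow> nat \<Rightarrow> nat set set set" where
  "Lnd n d = {T. (\<forall>X\<in>T. X \<subseteq> {1..n} \<and> card X \<le> d) \<and>
                 (\<forall>T'. T' \<subseteq> T \<and> card T' > 1 \<longrightarrow> Dd d T' > 0)}"

definition lessL :: "nat \<Rightarrow> nat set set \<Rightarrow> nat set set \<Rightarrow> bool" where
  "lessL d T T' \<longleftrightarrow> rho d T < rho d T' \<and> (\<forall>X\<in>T. \<exists>Y\<in>T'. Y \<subseteq> X)"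

definition leL :: "nat \<Rightarrow> nat set set \<Rightarrow> nat set set \<Rightarrow> bool" where
  "leL d T T' \<longleftrightarrow> lessL d T T' \<or> T = T'"

definition idealL :: "nat \<Rightarrow> nat \<Rightarrow> nat set set \<Rightarrow> nat set set set" where
  "idealL n d T = {S \<in> Lnd n d. leL d S T}"

definition poset_iso :: "'a set \<Rightarrow> ('a \<Rightarrow> 'a \<Rightarrow> bool) \<Rightarrow> 'b set \<Rightarrow> ('b \<Rightarrow> 'b \<Rightarrow> bool) \<Rightarrow> bool" where
  "poset_iso A leA B leB \<longleftrightarrow>
     (\<exists>f. bij_betw f A B \<and> (\<forall>x\<in>A. \<forall>y\<in>A. leA x y \<longleftrightarrow> leB (f x) (f y)))"

end

theory Submission
  imports Defs
begin

text \<open>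
  Every collection below \<open>{T1}\<close> consists of supersets of \<open>T1\<close>. Deleting \<open>T1\<close> from
  each member and relabelling the remaining \<open>n - |T1|\<close> points lowers every cardinality
  by \<open>|T1|\<close>, so codimensions are unchanged when \<open>d\<close> is replaced by \<open>d - |T1|\<close>; the map
  also commutes with intersections and inclusions. Hence it preserves \<open>\<rho>\<close>, \<open>D\<close> and the
  order, and identifies the supersets of \<open>T1\<close> in \<open>L(n,d)\<close> with \<open>L(n-|T1|, d-|T1|)\<close>.
  The condition \<open>\<rho>(S) < codim(T1)\<close> cutting out the ideal becomes \<open>\<rho>(S') \<le> d - |T1|\<close>,
  which holds for every member of \<open>L(n-|T1|, d-|T1|)\<close> except \<open>{\<emptyset>}\<close>, the image of \<open>{T1}\<close>.
\<close>

lemma mem_idealL_singleton: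
  "S \<in> idealL n d {T} \<longleftrightarrow>
     S \<in> Lnd n d \<and> (\<forall>X\<in>S. T \<subseteq> X) \<and> (S = {T} \<or> rho d S < codim d T)"
  unfolding idealL_def leL_def lessL_def by (auto simp: rho_def)

lemma Lnd_subset_Pow: "S \<in> Lnd m e \<Longrightarrow> S \<subseteq> Pow {1..m}"
  unfolding Lnd_def by blast

lemma rho_Lnd_le:
  assumes S: "S \<in> Lnd m e" and "S \<noteq> {{}}"
  shows "rho e S \<le> int e"
proof -
  have "finite S" using Lnd_subset_Pow[OF S] by (rule finite_subset) simp
  consider "S = {}" | X where "S = {X}" | "card S > 1"
  proof -
    have "card S = 0 \<or> card S = 1 \<or> card S > 1" by linarith
    with \<open>finite S\<close> that show thesis by (metis card_0_eq card_1_singletonE)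
  qed
  then show ?thesis
  proof cases
    case 1
    then show ?thesis by (simp add: rho_def)
  next
    case (2 X)
    with \<open>S \<noteq> {{}}\<close> Lnd_subset_Pow[OF S] have "X \<noteq> {}" "finite X"
      by (auto intro: finite_subset)
    then have "card X > 0" by (simp add: card_gt_0_iff)
    with 2 show ?thesis by (simp add: rho_def codim_def)
  next
    case 3
    then have "Dd e S > 0" using S unfolding Lnd_def by blast
    then show ?thesis unfolding Dd_def codim_def by linarith
  qed
qed

locale complement_relabelling =
  fixes n d :: nat and T :: "nat set" and g :: "nat \<Rightarrow> nat"
  assumes T_subset: "T \<subseteq> {1..n}"
    and card_T_le: "card T \<le> d"
    and g_bij: "bij_betw g ({1..n} - T) {1..n - card T}"
begin

definition above :: "nat set set" where
  "above = {X. T \<subseteq> X \<and> X \<subseteq> {1..n}}"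

definition contract :: "nat set \<Rightarrow> nat set" where
  "contract X = g ` (X - T)"

definition expand :: "nat set \<Rightarrow> nat set" where
  "expand Y = T \<union> inv_into ({1..n} - T) g ` Y"

lemma expand_contract: "X \<in> above \<Longrightarrow> expand (contract X) = X"
proof -
  assume X: "X \<in> above"
  then have "\<forall>x\<in>X - T. inv_into ({1..n} - T) g (g x) = x"
    using bij_betw_inv_into_left[OF g_bij] by (auto simp: above_def)
  then have "inv_into ({1..n} - T) g ` g ` (X - T) = X - T" by (simp add: image_image)
  with X show ?thesis by (auto simp: expand_def contract_def above_def)
qed

lemma inv_into_g_mem: "y \<in> {1..n - card T} \<Longrightarrow> inv_into ({1..n} - T) g y \<in> {1..n} - T"
  using bij_betw_inv_into[OF g_bij] bij_betwE by blast

lemma contract_expand: "Y \<subseteq> {1..n - card T} \<Longrightarrow> contract (expand Y) = Y"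
proof -
  assume Y: "Y \<subseteq> {1..n - card T}"
  then have "expand Y - T = inv_into ({1..n} - T) g ` Y"
    using inv_into_g_mem by (auto simp: expand_def)
  moreover have "\<forall>y\<in>Y. g (inv_into ({1..n} - T) g y) = y"
    using Y bij_betw_inv_into_right[OF g_bij] by blast
  ultimately show ?thesis by (simp add: contract_def image_image)
qed

lemma expand_mem_above: "Y \<subseteq> {1..n - card T} \<Longrightarrow> expand Y \<in> above"
  unfolding above_def expand_def using T_subset bij_betw_inv_into[OF g_bij]
  by (auto simp: bij_betw_def)

lemma contract_subset: "X \<in> above \<Longrightarrow> contract X \<subseteq> {1..n - card T}"
  unfolding above_def contract_def using g_bij by (auto simp: bij_betw_def)

lemma inj_on_contract: "inj_on contract above"
  by (metis expand_contract inj_on_inverseI)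

lemma expand_mono: "Y \<subseteq> Y' \<Longrightarrow> expand Y \<subseteq> expand Y'"
  unfolding expand_def by blast

lemma contract_subset_iff: "X \<in> above \<Longrightarrow> Y \<in> above \<Longrightarrow> contract Y \<subseteq> contract X \<longleftrightarrow> Y \<subseteq> X"
proof
  assume "X \<in> above" "Y \<in> above" "contract Y \<subseteq> contract X"
  then show "Y \<subseteq> X" by (metis expand_contract expand_mono)
qed (auto simp: contract_def)

lemma card_contract: "X \<in> above \<Longrightarrow> card (contract X) + card T = card X"
proof -
  assume X: "X \<in> above"
  then have "inj_on g (X - T)"
    using g_bij unfolding above_def bij_betw_def by (auto intro: inj_on_subset)
  then have "card (contract X) = card (X - T)" by (simp add: contract_def card_image)
  moreover have "finite X" using X unfolding above_def by (auto intro: finite_subset)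
  ultimately show ?thesis
    using X by (simp add: above_def card_Diff_subset_Int Int_absorb1 card_mono)
qed

lemma codim_contract: "X \<in> above \<Longrightarrow> codim (d - card T) (contract X) = codim d X"
  using card_contract[of X] card_T_le unfolding codim_def by simp

lemma rho_contract: "S \<subseteq> above \<Longrightarrow> rho (d - card T) (contract ` S) = rho d S"
  unfolding rho_def
  by (simp add: sum.reindex inj_on_subset[OF inj_on_contract] codim_contract subset_iff)

lemma Inter_contract: "S \<subseteq> above \<Longrightarrow> S \<noteq> {} \<Longrightarrow> \<Inter>(contract ` S) = contract (\<Inter>S)"
proof -
  assume S: "S \<subseteq> above" "S \<noteq> {}"
  then obtain X where "X \<in> S" by blast
  have "inj_on g ({1..n} - T)" using g_bij by (simp add: bij_betw_def)
  then have "g ` (\<Inter>Y\<in>S. Y - T) = (\<Inter>Y\<in>S. g ` (Y - T))"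
    by (rule image_INT) (use S \<open>X \<in> S\<close> in \<open>auto simp: above_def\<close>)
  moreover have "(\<Inter>Y\<in>S. Y - T) = \<Inter>S - T" using \<open>X \<in> S\<close> by blast
  ultimately show ?thesis by (simp add: contract_def)
qed

lemma Dd_contract: "S \<subseteq> above \<Longrightarrow> S \<noteq> {} \<Longrightarrow> Dd (d - card T) (contract ` S) = Dd d S"
proof -
  assume S: "S \<subseteq> above" "S \<noteq> {}"
  then have "\<Inter>S \<in> above" unfolding above_def by blast
  with S show ?thesis
    unfolding Dd_def by (simp add: Inter_contract codim_contract rho_contract)
qed

lemma contract_in_Lnd_iff:
  assumes S: "S \<subseteq> above"
  shows "contract ` S \<in> Lnd (n - card T) (d - card T) \<longleftrightarrow> S \<in> Lnd n d"
proof -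
  have member: "contract X \<subseteq> {1..n - card T} \<and> card (contract X) \<le> d - card T
      \<longleftrightarrow> X \<subseteq> {1..n} \<and> card X \<le> d" if "X \<in> S" for X
  proof -
    have X: "X \<in> above" using S that by blast
    then have "contract X \<subseteq> {1..n - card T}" by (rule contract_subset)
    moreover have "X \<subseteq> {1..n}" using X by (simp add: above_def)
    ultimately show ?thesis using card_contract[OF X] card_T_le by arith
  qed
  have family: "(1 < card (contract ` S') \<longrightarrow> 0 < Dd (d - card T) (contract ` S'))
      \<longleftrightarrow> (1 < card S' \<longrightarrow> 0 < Dd d S')" if "S' \<subseteq> S" for S'
  proof (cases "S' = {}")
    case False
    have "S' \<subseteq> above" using S that by blast
    then have "card (contract ` S') = card S'"
      by (intro card_image inj_on_subset[OF inj_on_contract])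
    with Dd_contract[OF \<open>S' \<subseteq> above\<close> False] show ?thesis by simp
  qed simp
  have "(\<forall>S'. S' \<subseteq> contract ` S \<and> 1 < card S' \<longrightarrow> 0 < Dd (d - card T) S')
      \<longleftrightarrow> (\<forall>S'. S' \<subseteq> S \<and> 1 < card S' \<longrightarrow> 0 < Dd d S')"
    unfolding imp_conjL all_subset_image using family by blast
  moreover have "(\<forall>Y\<in>contract ` S. Y \<subseteq> {1..n - card T} \<and> card Y \<le> d - card T)
      \<longleftrightarrow> (\<forall>X\<in>S. X \<subseteq> {1..n} \<and> card X \<le> d)"
    using member by simp
  ultimately show ?thesis unfolding Lnd_def mem_Collect_eq by (simp only:)
qed

lemma leL_contract_iff:
  assumes "S1 \<subseteq> above" and "S2 \<subseteq> above"
  shows "leL (d - card T) (contract ` S1) (contract ` S2) \<longleftrightarrow> leL d S1 S2"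
proof -
  have "(\<forall>Y\<in>contract ` S1. \<exists>Z\<in>contract ` S2. Z \<subseteq> Y) \<longleftrightarrow> (\<forall>X\<in>S1. \<exists>Y\<in>S2. Y \<subseteq> X)"
    using assms contract_subset_iff by (simp add: subset_eq[of S1] subset_eq[of S2])
  moreover have "contract ` S1 = contract ` S2 \<longleftrightarrow> S1 = S2"
    using assms by (simp add: inj_on_image_eq_iff[OF inj_on_contract])
  ultimately show ?thesis
    using assms unfolding leL_def lessL_def by (simp add: rho_contract)
qed

lemma idealL_singleton_subset_above: "S \<in> idealL n d {T} \<Longrightarrow> S \<subseteq> above"
  unfolding mem_idealL_singleton Lnd_def above_def by blast

lemma expand_image_in_idealL:
  assumes S': "S' \<in> Lnd (n - card T) (d - card T)"
  shows "expand ` S' \<in> idealL n d {T}"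
proof -
  have "\<forall>Y\<in>S'. Y \<subseteq> {1..n - card T}" using Lnd_subset_Pow[OF S'] by blast
  then have sub_above: "expand ` S' \<subseteq> above" and contract_expand_S': "contract ` expand ` S' = S'"
    using expand_mem_above contract_expand by (auto simp: image_image)
  then have "expand ` S' \<in> Lnd n d" using S' contract_in_Lnd_iff[OF sub_above] by simp
  moreover have "\<forall>X\<in>expand ` S'. T \<subseteq> X" using sub_above by (auto simp: above_def)
  moreover have "expand ` S' = {T} \<or> rho d (expand ` S') < codim d T"
  proof (cases "S' = {{}}")
    case True
    then show ?thesis by (simp add: expand_def)
  next
    case False
    have "rho d (expand ` S') = rho (d - card T) S'"
      using rho_contract[OF sub_above] contract_expand_S' by simp
    also have "\<dots> \<le> int (d - card T)" using rho_Lnd_le[OF S' False] .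
    also have "\<dots> < codim d T" using card_T_le by (simp add: codim_def of_nat_diff)
    finally show ?thesis ..
  qed
  ultimately show ?thesis unfolding mem_idealL_singleton by blast
qed

lemma bij_betw_contract_idealL:
  "bij_betw (image contract) (idealL n d {T}) (Lnd (n - card T) (d - card T))"
proof (rule bij_betw_byWitness[where f' = "image expand"])
  show "\<forall>S\<in>idealL n d {T}. expand ` contract ` S = S"
    using idealL_singleton_subset_above expand_contract by (simp add: image_image subset_iff)
  show "\<forall>S'\<in>Lnd (n - card T) (d - card T). contract ` expand ` S' = S'"
    using contract_expand Lnd_subset_Pow by (simp add: image_image subset_iff)
  show "image contract ` idealL n d {T} \<subseteq> Lnd (n - card T) (d - card T)"
    using idealL_singleton_subset_above contract_in_Lnd_iff by (auto simp: idealL_def)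
  show "image expand ` Lnd (n - card T) (d - card T) \<subseteq> idealL n d {T}"
    using expand_image_in_idealL by blast
qed

end

theorem lemma3p2:
  fixes n d :: nat and T1 :: "nat set"
  assumes "d < n" and "{T1} \<in> Lnd n d"
  shows "poset_iso (idealL n d {T1}) (leL d)
                   (Lnd (n - card T1) (d - card T1)) (leL (d - card T1))"
proof -
  have T1: "T1 \<subseteq> {1..n}" "card T1 \<le> d" using assms(2) unfolding Lnd_def by auto
  then have "card ({1..n} - T1) = card {1..n - card T1}"
    by (simp add: card_Diff_subset finite_subset)
  then obtain g where "bij_betw g ({1..n} - T1) {1..n - card T1}"
    by (metis finite_same_card_bij finite_Diff finite_atLeastAtMost)
  with T1 interpret complement_relabelling n d T1 g by unfold_locales
  show ?thesis
    unfolding poset_iso_def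
    using bij_betw_contract_idealL leL_contract_iff idealL_singleton_subset_above by metis
qed

end
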